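(* Let $A$ be a commutative unitary ring. The following are equivalent: (i) $A$ is a BL-ring; (ii) $(K:[I\otimes(J:I)])=(K:I)+(K:J)$ for all ideals $I,J,K$ of $A$.
   Context: For a commutative unitary ring $A$, $Id(A)$ is the set of ideals. For $I,J\in Id(A)$: $I+J=\{i+j: i\in I,j\in J\}$, $I\otimes J=\{\sum_{k=1}^n i_kj_k: i_k\in I, j_k\in J\}$ (ideal product), $(I:J)=\{x\in A: xJ\subseteq I\}$. Then $(Id(A),\cap,+,\otimes,\rightarrow,\{0\},A)$ with $I\rightarrow J=(J:I)$ and order $\subseteq$ is a residuated lattice. A residuated lattice is a bounded lattice with a commutative ordered monoid operation $\odot$ with unit $1$ and an operation $\rightarrow$ with $z\leq x\rightarrow y$ iff $x\odot z\leq y$; a BL-algebra is a residuated lattice satisfying $(x\rightarrow y)\vee(y\rightarrow x)=1$ and $x\odot(x\rightarrow y)=x\wedge y$. A BL-ring is a commutative unitary ring $A$ whose residuated lattice of ideals $Id(A)$ is a BL-algebra. *)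

theory Defs
  imports Main
begin

definition is_ideal :: "'a::comm_ring_1 set \<Rightarrow> bool" where
  "is_ideal I \<longleftrightarrow> 0 \<in> I \<and> (\<forall>x\<in>I. \<forall>y\<in>I. x + y \<in> I) \<and> (\<forall>a. \<forall>x\<in>I. a * x \<in> I)"

definition ideal_sum :: "'a::comm_ring_1 set \<Rightarrow> 'a set \<Rightarrow> 'a set" where
  "ideal_sum I J = {i + j | i j. i \<in> I \<and> j \<in> J}"

definition ideal_prod :: "'a::comm_ring_1 set \<Rightarrow> 'a set \<Rightarrow> 'a set" where
  "ideal_prod I J = {x. \<exists>(n::nat) f g. (\<forall>k<n. f k \<in> I \<and> g k \<in> J) \<and> x = (\<Sum>k<n. f k * g k)}"

text \<open>colon I J = (I : J) = {x. x J \<subseteq> I}\<close>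
definition colon :: "'a::comm_ring_1 set \<Rightarrow> 'a set \<Rightarrow> 'a set" where
  "colon I J = {x. \<forall>j\<in>J. x * j \<in> I}"

definition residuated_lattice ::
  "'b set \<Rightarrow> ('b \<Rightarrow> 'b \<Rightarrow> bool) \<Rightarrow> ('b \<Rightarrow> 'b \<Rightarrow> 'b) \<Rightarrow> ('b \<Rightarrow> 'b \<Rightarrow> 'b)
   \<Rightarrow> ('b \<Rightarrow> 'b \<Rightarrow> 'b) \<Rightarrow> ('b \<Rightarrow> 'b \<Rightarrow> 'b) \<Rightarrow> 'b \<Rightarrow> 'b \<Rightarrow> bool" where
  "residuated_lattice L le meet join mult imp zr one \<longleftrightarrow>
     zr \<in> L \<and> one \<in> L \<and>
     (\<forall>x\<in>L. \<forall>y\<in>L. meet x y \<in> L \<and> join x y \<in> L \<and> mult x y \<in> L \<and> imp x y \<in> L) \<and>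
     \<comment> \<open>partial order\<close>
     (\<forall>x\<in>L. le x x) \<and>
     (\<forall>x\<in>L. \<forall>y\<in>L. le x y \<and> le y x \<longrightarrow> x = y) \<and>
     (\<forall>x\<in>L. \<forall>y\<in>L. \<forall>z\<in>L. le x y \<and> le y z \<longrightarrow> le x z) \<and>
     \<comment> \<open>bounded lattice\<close>
     (\<forall>x\<in>L. \<forall>y\<in>L. \<forall>z\<in>L. le z (meet x y) \<longleftrightarrow> le z x \<and> le z y) \<and>
     (\<forall>x\<in>L. \<forall>y\<in>L. \<forall>z\<in>L. le (join x y) z \<longleftrightarrow> le x z \<and> le y z) \<and>
     (\<forall>x\<in>L. le zr x \<and> le x one) \<and>
     \<comment> \<open>commutative ordered monoid with unit one\<close>
     (\<forall>x\<in>L. \<forall>y\<in>L. mult x y = mult y x) \<and>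
     (\<forall>x\<in>L. \<forall>y\<in>L. \<forall>z\<in>L. mult (mult x y) z = mult x (mult y z)) \<and>
     (\<forall>x\<in>L. mult x one = x) \<and>
     (\<forall>x\<in>L. \<forall>y\<in>L. \<forall>z\<in>L. le x y \<longrightarrow> le (mult x z) (mult y z)) \<and>
     \<comment> \<open>residuation\<close>
     (\<forall>x\<in>L. \<forall>y\<in>L. \<forall>z\<in>L. le z (imp x y) \<longleftrightarrow> le (mult x z) y)"

definition bl_algebra ::
  "'b set \<Rightarrow> ('b \<Rightarrow> 'b \<Rightarrow> bool) \<Rightarrow> ('b \<Rightarrow> 'b \<Rightarrow> 'b) \<Rightarrow> ('b \<Rightarrow> 'b \<Rightarrow> 'b)
   \<Rightarrow> ('b \<Rightarrow> 'b \<Rightarrow> 'b) \<Rightarrow> ('b \<Rightarrow> 'b \<Rightarrow> 'b) \<Rightarrow> 'b \<Rightarrow> 'b \<Rightarrow> bool" where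
  "bl_algebra L le meet join mult imp zr one \<longleftrightarrow>
     residuated_lattice L le meet join mult imp zr one \<and>
     (\<forall>x\<in>L. \<forall>y\<in>L. join (imp x y) (imp y x) = one) \<and>
     (\<forall>x\<in>L. \<forall>y\<in>L. mult x (imp x y) = meet x y)"

definition bl_ring :: "'a::comm_ring_1 itself \<Rightarrow> bool" where
  "bl_ring (_::'a itself) \<longleftrightarrow>
     bl_algebra {I::'a set. is_ideal I} (\<subseteq>) (\<inter>) ideal_sum ideal_prod (\<lambda>I J. colon J I)
       {0} UNIV"

end

theory Submission
  imports Defs
begin

text \<open>The ideals always form a residuated lattice, so A is a BL-ring iff its ideals are
  prelinear, 1 \<in> (J : I) + (I : J), and divisible, I (J : I) = I \<inter> J.
  Given both, a decomposition 1 = u + v with u \<in> (J : I) and v \<in> (I : J) splits every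
  a \<in> (K : I \<inter> J) as a u + a v \<in> (K : I) + (K : J).
  Conversely, whenever I (J : I) \<subseteq> K, condition (ii) puts 1 into (K : I) + (K : J), and
  1 = u + v with u I, v J \<subseteq> K forces I \<inter> J \<subseteq> K.  Taking K = I (J : I) gives divisibility,
  and taking K = I \<inter> J gives prelinearity.\<close>

lemma ideal_add: "is_ideal T \<Longrightarrow> x \<in> T \<Longrightarrow> y \<in> T \<Longrightarrow> x + y \<in> T"
  by (simp add: is_ideal_def)

lemma ideal_mult_left: "is_ideal T \<Longrightarrow> x \<in> T \<Longrightarrow> a * x \<in> T"
  by (simp add: is_ideal_def)

lemma ideal_mult_right: "is_ideal T \<Longrightarrow> x \<in> T \<Longrightarrow> x * a \<in> T"
  by (metis ideal_mult_left mult.commute)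

lemma ideal_zero: "is_ideal T \<Longrightarrow> 0 \<in> T"
  by (simp add: is_ideal_def)

lemma sum_in_ideal:
  "is_ideal T \<Longrightarrow> (\<And>k. k < n \<Longrightarrow> h k \<in> T) \<Longrightarrow> (\<Sum>k<(n::nat). h k) \<in> T"
  by (induction n) (auto simp: ideal_zero ideal_add)

lemma ideal_eq_UNIV_iff: "is_ideal T \<Longrightarrow> T = UNIV \<longleftrightarrow> 1 \<in> T"
  by (metis UNIV_I UNIV_eq_I ideal_mult_left mult.right_neutral)

lemma ideal_eqI:
  assumes "is_ideal A" "is_ideal B" "\<And>R. is_ideal R \<Longrightarrow> A \<subseteq> R \<longleftrightarrow> B \<subseteq> R"
  shows "A = B"
  using assms by blast

lemma is_ideal_Int: "is_ideal X \<Longrightarrow> is_ideal Y \<Longrightarrow> is_ideal (X \<inter> Y)"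
  by (simp add: is_ideal_def)

lemma is_ideal_zero: "is_ideal {0}"
  by (simp add: is_ideal_def)

lemma is_ideal_UNIV: "is_ideal UNIV"
  by (simp add: is_ideal_def)

lemma is_ideal_colon: "is_ideal K \<Longrightarrow> is_ideal (colon K I)"
  by (auto simp: is_ideal_def colon_def distrib_right mult.assoc)

lemma one_in_colon_iff: "1 \<in> colon K I \<longleftrightarrow> I \<subseteq> K"
  by (auto simp: colon_def)

lemma colon_mono: "K \<subseteq> K' \<Longrightarrow> colon K I \<subseteq> colon K' I"
  by (auto simp: colon_def)

lemma colon_antimono: "I \<subseteq> I' \<Longrightarrow> colon K I' \<subseteq> colon K I"
  by (auto simp: colon_def)

lemma ideal_sum_memI: "x \<in> X \<Longrightarrow> y \<in> Y \<Longrightarrow> x + y \<in> ideal_sum X Y"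
  by (auto simp: ideal_sum_def)

lemma ideal_sum_memE:
  assumes "a \<in> ideal_sum X Y"
  obtains x y where "x \<in> X" "y \<in> Y" "a = x + y"
  using assms by (auto simp: ideal_sum_def)

lemma is_ideal_ideal_sum:
  assumes X: "is_ideal X" and Y: "is_ideal Y"
  shows "is_ideal (ideal_sum X Y)"
  unfolding is_ideal_def
proof (intro conjI ballI allI)
  show "0 \<in> ideal_sum X Y"
    using ideal_sum_memI[OF ideal_zero[OF X] ideal_zero[OF Y]] by simp
next
  fix a b assume "a \<in> ideal_sum X Y" "b \<in> ideal_sum X Y"
  then obtain x y x' y' where "x \<in> X" "y \<in> Y" "a = x + y" "x' \<in> X" "y' \<in> Y" "b = x' + y'"
    by (elim ideal_sum_memE)
  then have "a + b = (x + x') + (y + y')" "x + x' \<in> X" "y + y' \<in> Y"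
    by (simp_all add: ac_simps ideal_add X Y)
  then show "a + b \<in> ideal_sum X Y"
    by (simp add: ideal_sum_memI)
next
  fix c a assume "a \<in> ideal_sum X Y"
  then obtain x y where "x \<in> X" "y \<in> Y" "a = x + y"
    by (elim ideal_sum_memE)
  then show "c * a \<in> ideal_sum X Y"
    by (simp add: distrib_left ideal_sum_memI ideal_mult_left X Y)
qed

lemma ideal_sum_subset_iff:
  assumes "is_ideal X" "is_ideal Y" "is_ideal T"
  shows "ideal_sum X Y \<subseteq> T \<longleftrightarrow> X \<subseteq> T \<and> Y \<subseteq> T"
proof
  show "X \<subseteq> T \<and> Y \<subseteq> T" if "ideal_sum X Y \<subseteq> T"
    using that ideal_sum_memI[of _ X 0 Y] ideal_sum_memI[of 0 X _ Y] assms(1,2)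
    by (auto simp: ideal_zero)
  show "ideal_sum X Y \<subseteq> T" if "X \<subseteq> T \<and> Y \<subseteq> T"
    using that by (auto simp: ideal_sum_def intro!: ideal_add[OF assms(3)])
qed

lemma ideal_sum_mono: "X \<subseteq> X' \<Longrightarrow> Y \<subseteq> Y' \<Longrightarrow> ideal_sum X Y \<subseteq> ideal_sum X' Y'"
  by (auto simp: ideal_sum_def)

lemma one_in_ideal_sum_iff: "1 \<in> ideal_sum X Y \<longleftrightarrow> (\<exists>u\<in>X. \<exists>v\<in>Y. u + v = 1)"
  by (auto simp: ideal_sum_def)

lemma ideal_prod_memI: "x \<in> X \<Longrightarrow> y \<in> Y \<Longrightarrow> x * y \<in> ideal_prod X Y"
  unfolding ideal_prod_def by (rule CollectI, rule exI[of _ 1]) auto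

lemma ideal_prod_subset_iff:
  "is_ideal T \<Longrightarrow> ideal_prod X Y \<subseteq> T \<longleftrightarrow> (\<forall>x\<in>X. \<forall>y\<in>Y. x * y \<in> T)"
  using ideal_prod_memI by (fastforce simp: ideal_prod_def intro!: sum_in_ideal)

lemma ideal_prod_add_product:
  assumes "a \<in> ideal_prod X Y" "x \<in> X" "y \<in> Y"
  shows "a + x * y \<in> ideal_prod X Y"
proof -
  obtain n :: nat and f g where fg: "\<forall>k<n. f k \<in> X \<and> g k \<in> Y" "a = (\<Sum>k<n. f k * g k)"
    using assms(1) by (auto simp: ideal_prod_def)
  have "a + x * y = (\<Sum>k<Suc n. (f(n := x)) k * (g(n := y)) k)"
    using fg(2) by (simp add: add.commute)
  moreover have "\<forall>k<Suc n. (f(n := x)) k \<in> X \<and> (g(n := y)) k \<in> Y"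
    using fg(1) assms(2,3) by (simp add: less_Suc_eq)
  ultimately show ?thesis
    unfolding ideal_prod_def by blast
qed

lemma is_ideal_ideal_prod:
  assumes Y: "is_ideal Y"
  shows "is_ideal (ideal_prod X Y)"
  unfolding is_ideal_def
proof (intro conjI ballI allI)
  show "0 \<in> ideal_prod X Y"
    unfolding ideal_prod_def by (rule CollectI, rule exI[of _ 0]) simp
next
  fix a b assume a: "a \<in> ideal_prod X Y" and "b \<in> ideal_prod X Y"
  then obtain m :: nat and f g where "\<forall>k<m. f k \<in> X \<and> g k \<in> Y" "b = (\<Sum>k<m. f k * g k)"
    by (auto simp: ideal_prod_def)
  then show "a + b \<in> ideal_prod X Y"
  proof (induction m arbitrary: b)
    case 0
    then show ?case using a by simp
  next
    case (Suc m)
    then show ?case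
      using ideal_prod_add_product[of "a + (\<Sum>k<m. f k * g k)" X Y "f m" "g m"]
      by (simp add: add.assoc)
  qed
next
  fix c a assume "a \<in> ideal_prod X Y"
  then obtain n :: nat and f g where fg: "\<forall>k<n. f k \<in> X \<and> g k \<in> Y" "a = (\<Sum>k<n. f k * g k)"
    by (auto simp: ideal_prod_def)
  have "\<forall>k<n. f k \<in> X \<and> c * g k \<in> Y"
    using fg(1) ideal_mult_left[OF Y] by blast
  moreover have "c * a = (\<Sum>k<n. f k * (c * g k))"
    by (simp add: fg(2) sum_distrib_left ac_simps)
  ultimately show "c * a \<in> ideal_prod X Y"
    unfolding ideal_prod_def by (intro CollectI exI[of _ n] exI[of _ f] exI[of _ "\<lambda>k. c * g k"]) simp
qed

lemma ideal_prod_commute: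
  assumes "is_ideal X" "is_ideal Y"
  shows "ideal_prod X Y = ideal_prod Y X"
  by (rule ideal_eqI) (simp_all add: assms is_ideal_ideal_prod ideal_prod_subset_iff, metis mult.commute)

lemma subset_colon_iff:
  assumes "is_ideal Y"
  shows "Z \<subseteq> colon Y X \<longleftrightarrow> ideal_prod X Z \<subseteq> Y"
proof -
  have "Z \<subseteq> colon Y X \<longleftrightarrow> (\<forall>z\<in>Z. \<forall>x\<in>X. z * x \<in> Y)"
    by (auto simp: colon_def)
  also have "\<dots> \<longleftrightarrow> (\<forall>x\<in>X. \<forall>z\<in>Z. x * z \<in> Y)"
    by (metis mult.commute)
  also have "\<dots> \<longleftrightarrow> ideal_prod X Z \<subseteq> Y"
    by (simp add: ideal_prod_subset_iff assms)
  finally show ?thesis .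
qed

lemma ideal_prod_prod_subset_iff:
  assumes R: "is_ideal R"
  shows "ideal_prod (ideal_prod X Y) Z \<subseteq> R \<longleftrightarrow> (\<forall>x\<in>X. \<forall>y\<in>Y. \<forall>z\<in>Z. x * y * z \<in> R)"
proof -
  have "ideal_prod (ideal_prod X Y) Z \<subseteq> R \<longleftrightarrow> ideal_prod X Y \<subseteq> colon R Z"
    unfolding ideal_prod_subset_iff[OF R] colon_def by blast
  also have "\<dots> \<longleftrightarrow> (\<forall>x\<in>X. \<forall>y\<in>Y. \<forall>z\<in>Z. x * y * z \<in> R)"
    unfolding ideal_prod_subset_iff[OF is_ideal_colon[OF R]] by (simp add: colon_def)
  finally show ?thesis .
qed

lemma ideal_prod_assoc:
  assumes X: "is_ideal X" and Y: "is_ideal Y" and Z: "is_ideal Z"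
  shows "ideal_prod (ideal_prod X Y) Z = ideal_prod X (ideal_prod Y Z)"
proof (rule ideal_eqI)
  fix R :: "'a set" assume R: "is_ideal R"
  have "ideal_prod X (ideal_prod Y Z) = ideal_prod (ideal_prod Y Z) X"
    by (simp add: X Y Z ideal_prod_commute is_ideal_ideal_prod)
  moreover have rotate: "y * z * x = x * y * z" for x y z :: 'a
    by (simp add: ac_simps)
  ultimately show "ideal_prod (ideal_prod X Y) Z \<subseteq> R \<longleftrightarrow> ideal_prod X (ideal_prod Y Z) \<subseteq> R"
    by (auto simp: ideal_prod_prod_subset_iff R) (metis rotate)+
qed (simp_all add: X Y Z is_ideal_ideal_prod)

lemma ideal_prod_UNIV:
  assumes X: "is_ideal X"
  shows "ideal_prod X UNIV = X"
proof (rule ideal_eqI)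
  fix R :: "'a set" assume "is_ideal R"
  then show "ideal_prod X UNIV \<subseteq> R \<longleftrightarrow> X \<subseteq> R"
    by (auto simp: ideal_prod_subset_iff ideal_mult_right) (metis mult_1_right)
qed (simp_all add: X is_ideal_ideal_prod is_ideal_UNIV)

lemma ideal_prod_mono: "is_ideal Z \<Longrightarrow> X \<subseteq> Y \<Longrightarrow> ideal_prod X Z \<subseteq> ideal_prod Y Z"
  by (auto simp: ideal_prod_subset_iff is_ideal_ideal_prod ideal_prod_memI)

lemma residuated_lattice_ideals:
  "residuated_lattice {I::'a::comm_ring_1 set. is_ideal I} (\<subseteq>) (\<inter>) ideal_sum ideal_prod
     (\<lambda>I J. colon J I) {0} UNIV"
  unfolding residuated_lattice_def
  by (simp add: is_ideal_zero is_ideal_UNIV is_ideal_Int is_ideal_ideal_sum is_ideal_ideal_prod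
      is_ideal_colon ideal_sum_subset_iff ideal_zero ideal_prod_assoc ideal_prod_UNIV
      ideal_prod_mono subset_colon_iff)
    (meson antisym order_trans ideal_prod_commute)

definition ideals_prelinear :: "'a::comm_ring_1 itself \<Rightarrow> bool" where
  "ideals_prelinear _ \<longleftrightarrow>
     (\<forall>I J :: 'a set. is_ideal I \<longrightarrow> is_ideal J \<longrightarrow> 1 \<in> ideal_sum (colon J I) (colon I J))"

definition ideals_divisible :: "'a::comm_ring_1 itself \<Rightarrow> bool" where
  "ideals_divisible _ \<longleftrightarrow>
     (\<forall>I J :: 'a set. is_ideal I \<longrightarrow> is_ideal J \<longrightarrow> ideal_prod I (colon J I) = I \<inter> J)"

lemma bl_ring_iff_prelinear_divisible:
  "bl_ring TYPE('a::comm_ring_1) \<longleftrightarrow> ideals_prelinear TYPE('a) \<and> ideals_divisible TYPE('a)"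
  using residuated_lattice_ideals[where 'a = 'a]
  by (auto simp: bl_ring_def bl_algebra_def ideals_prelinear_def ideals_divisible_def
      ideal_eq_UNIV_iff is_ideal_ideal_sum is_ideal_colon)

lemma ideal_prod_colon_subset_Int:
  "is_ideal I \<Longrightarrow> is_ideal J \<Longrightarrow> ideal_prod I (colon J I) \<subseteq> I \<inter> J"
  by (auto simp: ideal_prod_subset_iff is_ideal_Int colon_def ideal_mult_right mult.commute)

lemma Int_subset_if_one_in_colon_sum:
  assumes K: "is_ideal K" and one: "1 \<in> ideal_sum (colon K I) (colon K J)"
  shows "I \<inter> J \<subseteq> K"
proof
  fix x assume x: "x \<in> I \<inter> J"
  obtain u v where "u \<in> colon K I" "v \<in> colon K J" "u + v = 1"
    using one by (auto simp: one_in_ideal_sum_iff)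
  then have "u * x \<in> K" "v * x \<in> K" and "x = u * x + v * x"
    using x by (auto simp: colon_def simp flip: distrib_right)
  then show "x \<in> K"
    by (metis ideal_add K)
qed

lemma colon_Int_eq_ideal_sum:
  assumes I: "is_ideal I" and J: "is_ideal J" and K: "is_ideal K"
    and one: "1 \<in> ideal_sum (colon J I) (colon I J)"
  shows "colon K (I \<inter> J) = ideal_sum (colon K I) (colon K J)"
proof
  show "ideal_sum (colon K I) (colon K J) \<subseteq> colon K (I \<inter> J)"
    by (simp add: ideal_sum_subset_iff K is_ideal_colon colon_antimono)
  show "colon K (I \<inter> J) \<subseteq> ideal_sum (colon K I) (colon K J)"
  proof
    fix a assume a: "a \<in> colon K (I \<inter> J)"
    obtain u v where u: "u \<in> colon J I" and v: "v \<in> colon I J" and "u + v = 1"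
      using one by (auto simp: one_in_ideal_sum_iff)
    have "a * u \<in> colon K I"
      using a u I by (auto simp: colon_def ideal_mult_left mult.assoc)
    moreover have "a * v \<in> colon K J"
      using a v J by (auto simp: colon_def ideal_mult_left mult.assoc)
    moreover have "a = a * u + a * v"
      using \<open>u + v = 1\<close> by (metis distrib_left mult_1_right)
    ultimately show "a \<in> ideal_sum (colon K I) (colon K J)"
      by (metis ideal_sum_memI)
  qed
qed

lemma prelinear_divisible_if_colon_ideal_prod_eq:
  assumes I: "is_ideal I" and J: "is_ideal J"
    and eq: "\<forall>K. is_ideal K \<longrightarrow> colon K (ideal_prod I (colon J I)) = ideal_sum (colon K I) (colon K J)"
  shows "1 \<in> ideal_sum (colon J I) (colon I J)" and "ideal_prod I (colon J I) = I \<inter> J"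
proof -
  have one_in_colon_sum: "1 \<in> ideal_sum (colon K I) (colon K J)"
    if "is_ideal K" "ideal_prod I (colon J I) \<subseteq> K" for K
  proof -
    have "1 \<in> colon K (ideal_prod I (colon J I))"
      using that(2) by (simp add: one_in_colon_iff)
    with eq that(1) show ?thesis
      by simp
  qed
  have "1 \<in> ideal_sum (colon (I \<inter> J) I) (colon (I \<inter> J) J)"
    by (intro one_in_colon_sum is_ideal_Int ideal_prod_colon_subset_Int I J)
  also have "\<dots> \<subseteq> ideal_sum (colon J I) (colon I J)"
    by (intro ideal_sum_mono colon_mono) simp_all
  finally show "1 \<in> ideal_sum (colon J I) (colon I J)" .
  show "ideal_prod I (colon J I) = I \<inter> J"
  proof (rule antisym)
    show "ideal_prod I (colon J I) \<subseteq> I \<inter> J"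
      using I J by (rule ideal_prod_colon_subset_Int)
    show "I \<inter> J \<subseteq> ideal_prod I (colon J I)"
      by (intro Int_subset_if_one_in_colon_sum one_in_colon_sum is_ideal_ideal_prod is_ideal_colon
          I J order_refl)
  qed
qed

theorem corollary3p6:
  shows "bl_ring TYPE('a::comm_ring_1) \<longleftrightarrow>
    (\<forall>I J K :: 'a set. is_ideal I \<longrightarrow> is_ideal J \<longrightarrow> is_ideal K \<longrightarrow>
       colon K (ideal_prod I (colon J I)) = ideal_sum (colon K I) (colon K J))"
proof
  assume "bl_ring TYPE('a)"
  then have "ideals_prelinear TYPE('a)" and "ideals_divisible TYPE('a)"
    by (simp_all add: bl_ring_iff_prelinear_divisible)
  then show "\<forall>I J K :: 'a set. is_ideal I \<longrightarrow> is_ideal J \<longrightarrow> is_ideal K \<longrightarrow>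
      colon K (ideal_prod I (colon J I)) = ideal_sum (colon K I) (colon K J)"
    by (simp add: ideals_prelinear_def ideals_divisible_def colon_Int_eq_ideal_sum)
next
  assume "\<forall>I J K :: 'a set. is_ideal I \<longrightarrow> is_ideal J \<longrightarrow> is_ideal K \<longrightarrow>
    colon K (ideal_prod I (colon J I)) = ideal_sum (colon K I) (colon K J)"
  then have "ideals_prelinear TYPE('a)" and "ideals_divisible TYPE('a)"
    unfolding ideals_prelinear_def ideals_divisible_def
    by (meson prelinear_divisible_if_colon_ideal_prod_eq)+
  then show "bl_ring TYPE('a)"
    by (simp add: bl_ring_iff_prelinear_divisible)
qed

end
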